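(* Let $0<q<1$, let $n$ be a positive integer and let $s_1,\dots,s_n$ be real numbers with $s_j>1$ for all $j$. Then \[ \sum_{\sigma\in\mathfrak{S}_n} \zeta\big[s_{\sigma(1)},s_{\sigma(2)},\dots,s_{\sigma(n)}\big] = \sum_{\mathscr{P}} (-1)^{n-|\mathscr{P}|} \prod_{P\in\mathscr{P}} (|P|-1)! \sum_{\nu=0}^{|P|-1}\binom{|P|-1}{\nu}(1-q)^{\nu}\,\zeta\Big[\sum_{j\in P}s_j-\nu\Big], \] where $\mathfrak{S}_n$ is the symmetric group on $\{1,\dots,n\}$ and the sum on the right runs over all unordered set partitions $\mathscr{P}$ of $\{1,\dots,n\}$ (sets of pairwise disjoint non-empty subsets with union $\{1,\dots,n\}$), $|\mathscr{P}|$ being the number of blocks.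
   Context: Fix $0<q<1$. For real $x$, $[x]_q := (1-q^x)/(1-q)$. For an integer $m\ge1$ and real $s_1,\dots,s_m$ with $s_1>1$ and $s_j\ge1$ for $j\ge2$, the multiple $q$-zeta function is $\zeta[s_1,\dots,s_m] := \sum_{k_1>\cdots>k_m>0}\prod_{j=1}^m q^{(s_j-1)k_j}/[k_j]_q^{s_j}$ (sum over positive integers). *)

theory Defs
  imports "HOL-Analysis.Analysis" "HOL-Library.Disjoint_Sets" "HOL-Combinatorics.Permutations"
begin

definition qint :: "real \<Rightarrow> real \<Rightarrow> real" where
  "qint q x = (1 - q powr x) / (1 - q)"

definition mzeta_idx :: "nat \<Rightarrow> nat list set" where
  "mzeta_idx m = {ks. length ks = m \<and> sorted_wrt (>) ks \<and> (\<forall>k\<in>set ks. 0 < k)}"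

definition mqzeta :: "real \<Rightarrow> real list \<Rightarrow> real" where
  "mqzeta q s = (\<Sum>\<^sub>\<infinity> ks \<in> mzeta_idx (length s).
      \<Prod>j<length s. q powr ((s ! j - 1) * real (ks ! j)) / (qint q (real (ks ! j))) powr (s ! j))"

end

theory Submission
  imports Defs
begin

text \<open>
  Truncate all indices to \<open>k \<le> N\<close>. A permutation of \<open>{1..n}\<close> together with a strictly decreasing
  index list is the same thing as an injective map \<open>k : {1..n} \<rightarrow> {1..N}\<close>, so the truncated
  left-hand side is the sum over injective \<open>k\<close> of \<open>\<Prod>j. w\<^sub>j (k j)\<close>, where \<open>w\<^sub>j\<close> is the summand
  of \<open>\<zeta>[s\<^sub>j]\<close>. Inclusion-exclusion over the lattice of set partitions rewrites this as a sum over
  the partitions of \<open>{1..n}\<close> of products, over their blocks \<open>B\<close>, of the diagonal sums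
  \<open>\<Sum>k. \<Prod>j\<in>B. w\<^sub>j k\<close>, each weighted by the Moebius value \<open>(-1)^(|B|-1) (|B|-1)!\<close>.
  Raising \<open>(1 - q) [k]\<^sub>q + q^k = 1\<close> to the power \<open>|B| - 1\<close> expands \<open>\<Prod>j\<in>B. w\<^sub>j k\<close> binomially
  into summands of \<open>\<zeta>[\<Sum>j\<in>B. s\<^sub>j - \<nu>]\<close>. Letting \<open>N \<rightarrow> \<infinity>\<close> gives the formula.
\<close>

section \<open>Partitions of an extended set\<close>

definition extend_partition :: "'a \<Rightarrow> 'a set set \<times> 'a set option \<Rightarrow> 'a set set" where
  "extend_partition a = (\<lambda>(P, ob).
     insert (insert a (case ob of None \<Rightarrow> {} | Some B \<Rightarrow> B)) (P - set_option ob))"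

definition partition_slots :: "'a set \<Rightarrow> ('a set set \<times> 'a set option) set" where
  "partition_slots A = (SIGMA P:{P. partition_on A P}. insert None (Some ` P))"

lemma partition_on_Diff_block:
  assumes "partition_on A P" "B \<in> P"
  shows "partition_on (A - B) (P - {B})"
proof -
  have "disjnt B (\<Union>(P - {B}))"
    using partition_onD2[OF assms(1)] assms(2) by (auto simp: disjnt_def disjoint_def)
  moreover have "insert B (P - {B}) = P"
    using assms(2) by blast
  ultimately show ?thesis
    using partition_on_insert assms(1) by metis
qed

lemma extend_partition_Diff_singleton:
  assumes "a \<notin> A" "(P, ob) \<in> partition_slots A"
  shows "(\<lambda>C. C - {a}) ` extend_partition a (P, ob) - {{}} = P"
proof -
  have P: "partition_on A P" and ob: "set_option ob \<subseteq> P"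
    using assms(2) by (auto simp: partition_slots_def)
  have "C - {a} = C" "C \<noteq> {}" if "C \<in> P" for C
    using that assms(1) partition_onD1[OF P] partition_onD3[OF P] by auto
  then show ?thesis
    using ob by (cases ob) (auto simp: extend_partition_def image_iff)
qed

lemma extend_partition_block_of:
  assumes "a \<notin> A" "(P, ob) \<in> partition_slots A" "C \<in> extend_partition a (P, ob)" "a \<in> C"
  shows "C = insert a (case ob of None \<Rightarrow> {} | Some B \<Rightarrow> B)"
proof -
  have "partition_on A P"
    using assms(2) by (simp add: partition_slots_def)
  then have "a \<notin> \<Union>P"
    using assms(1) partition_onD1 by blast
  then show ?thesis
    using assms(3,4) by (auto simp: extend_partition_def)
qed

lemma inj_on_extend_partition:
  assumes "a \<notin> A"
  shows "inj_on (extend_partition a) (partition_slots A)"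
proof (rule inj_onI, clarify)
  fix P1 ob1 P2 ob2
  assume slot1: "(P1, ob1) \<in> partition_slots A" and slot2: "(P2, ob2) \<in> partition_slots A"
    and eq: "extend_partition a (P1, ob1) = extend_partition a (P2, ob2)"
  have P: "P1 = P2"
    using extend_partition_Diff_singleton[OF assms slot1] extend_partition_Diff_singleton[OF assms slot2] eq
    by simp
  have part: "partition_on A P1" and ob1: "set_option ob1 \<subseteq> P1" and ob2: "set_option ob2 \<subseteq> P1"
    using slot1 slot2 P by (auto simp: partition_slots_def)
  have block: "a \<notin> B" "B \<noteq> {}" if "B \<in> P1" for B
    using that assms partition_onD1[OF part] partition_onD3[OF part] by auto
  have "insert a (case ob1 of None \<Rightarrow> {} | Some B \<Rightarrow> B) \<in> extend_partition a (P2, ob2)"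
    unfolding eq[symmetric] by (simp add: extend_partition_def)
  then have "insert a (case ob1 of None \<Rightarrow> {} | Some B \<Rightarrow> B) = insert a (case ob2 of None \<Rightarrow> {} | Some B \<Rightarrow> B)"
    using extend_partition_block_of[OF assms slot2] by blast
  then have "ob1 = ob2"
    using block ob1 ob2 by (cases ob1; cases ob2) (auto simp: insert_ident)
  with P show "P1 = P2 \<and> ob1 = ob2" ..
qed

lemma partition_on_extend_partition:
  assumes "a \<notin> A" "(P, ob) \<in> partition_slots A"
  shows "partition_on (insert a A) (extend_partition a (P, ob))"
proof -
  have P: "partition_on A P" and ob: "set_option ob \<subseteq> P"
    using assms(2) by (auto simp: partition_slots_def)
  have aP: "a \<notin> \<Union>P"
    using assms partition_onD1[OF P] by blast
  show ?thesis
  proof (cases ob)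
    case None
    have "partition_on (insert a A - {a}) P"
      using assms P by simp
    then show ?thesis
      using partition_on_insert[of "{a}" P] aP None by (simp add: extend_partition_def disjnt_def)
  next
    case (Some B)
    with ob have B: "B \<in> P" by simp
    have rest: "partition_on (A - B) (P - {B})"
      by (rule partition_on_Diff_block[OF P B])
    have disj: "disjnt (insert a B) (\<Union>(P - {B}))"
      using partition_onD1[OF rest] aP by (auto simp: disjnt_def)
    have "insert a A - insert a B = A - B" "B \<subseteq> A"
      using assms B partition_onD1[OF P] by auto
    then have "partition_on (insert a A) (insert (insert a B) (P - {B}))"
      using partition_on_insert[OF disj] rest by auto
    then show ?thesis
      using Some by (simp add: extend_partition_def)
  qed
qed

lemma partition_on_insert_in_extend_partition_image:
  assumes "a \<notin> A" "partition_on (insert a A) Q"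
  shows "Q \<in> extend_partition a ` partition_slots A"
proof -
  obtain C where C: "C \<in> Q" "a \<in> C"
    using partition_onD1[OF assms(2)] by blast
  have rest: "partition_on (insert a A - C) (Q - {C})"
    by (rule partition_on_Diff_block[OF assms(2) C(1)])
  show ?thesis
  proof (cases "C = {a}")
    case True
    have "partition_on A (Q - {C})"
      using rest True assms(1) by simp
    moreover have "Q = extend_partition a (Q - {C}, None)"
      using True C by (auto simp: extend_partition_def)
    ultimately show ?thesis
      by (force simp: partition_slots_def)
  next
    case False
    define B where "B = C - {a}"
    have B: "B \<noteq> {}" "B \<subseteq> A" "insert a B = C"
      using False C partition_onD1[OF assms(2)] by (auto simp: B_def)
    have rest_A: "insert a A - C = A - B"
      using assms(1) C by (auto simp: B_def)
    have disj: "disjnt B (\<Union>(Q - {C}))"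
      using rest partition_onD1 by (fastforce simp: disjnt_def rest_A)
    then have "partition_on A (insert B (Q - {C}))"
      using partition_on_insert rest rest_A B by (metis Diff_partition)
    moreover have "B \<notin> Q - {C}"
      using disj B(1) by (auto simp: disjnt_def)
    then have "Q = extend_partition a (insert B (Q - {C}), Some B)"
      using B(3) C by (auto simp: extend_partition_def)
    ultimately show ?thesis
      by (force simp: partition_slots_def)
  qed
qed

lemma extend_partition_image:
  assumes "a \<notin> A"
  shows "extend_partition a ` partition_slots A = {Q. partition_on (insert a A) Q}"
  using partition_on_extend_partition[OF assms] partition_on_insert_in_extend_partition_image[OF assms]
  by auto

lemma sum_partitions_insert:
  assumes "finite A" "a \<notin> A"
  shows "(\<Sum>Q | partition_on (insert a A) Q. F Q) =
    (\<Sum>P | partition_on A P. F (insert {a} P) + (\<Sum>B\<in>P. F (insert (insert a B) (P - {B}))))"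
proof -
  have "(\<Sum>Q | partition_on (insert a A) Q. F Q) = (\<Sum>x\<in>partition_slots A. F (extend_partition a x))"
    using sum.reindex[OF inj_on_extend_partition[OF assms(2)], of F] extend_partition_image[OF assms(2)]
    by simp
  also have "\<dots> = (\<Sum>P | partition_on A P. \<Sum>ob\<in>insert None (Some ` P). F (extend_partition a (P, ob)))"
    unfolding partition_slots_def
    using finitely_many_partition_on[OF assms(1)] finite_elements[OF assms(1)]
    by (subst sum.Sigma) auto
  also have "\<dots> = (\<Sum>P | partition_on A P. F (insert {a} P) + (\<Sum>B\<in>P. F (insert (insert a B) (P - {B}))))"
    using finite_elements[OF assms(1)]
    by (intro sum.cong refl) (simp add: sum.reindex extend_partition_def)
  finally show ?thesis .
qed

section \<open>Sums over injective maps\<close>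

definition inj_maps :: "'a set \<Rightarrow> 'b set \<Rightarrow> ('a \<Rightarrow> 'b) set" where
  "inj_maps A K = {k \<in> A \<rightarrow>\<^sub>E K. inj_on k A}"

lemma finite_inj_maps: "finite A \<Longrightarrow> finite K \<Longrightarrow> finite (inj_maps A K)"
  unfolding inj_maps_def by (rule finite_subset[of _ "A \<rightarrow>\<^sub>E K"]) (auto intro: finite_PiE)

lemma inj_maps_insert:
  assumes "a \<notin> A"
  shows "inj_maps (insert a A) K = (\<lambda>(k, x). k(a := x)) ` (SIGMA k:inj_maps A K. K - k ` A)"
proof (intro equalityI subsetI)
  fix k' assume "k' \<in> inj_maps (insert a A) K"
  then have k': "k' \<in> insert a A \<rightarrow>\<^sub>E K" "inj_on k' (insert a A)"
    by (simp_all add: inj_maps_def)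
  have same: "inj_on (k'(a := undefined)) A = inj_on k' A" "k'(a := undefined) ` A = k' ` A"
    using assms by (auto intro!: inj_on_cong)
  have "k'(a := undefined) \<in> inj_maps A K"
    using fun_upd_in_PiE[OF assms k'(1)] k'(2) same(1) by (simp add: inj_maps_def)
  moreover have "k' a \<in> K - k'(a := undefined) ` A"
    using k' assms same(2) by (auto simp: PiE_iff)
  ultimately show "k' \<in> (\<lambda>(k, x). k(a := x)) ` (SIGMA k:inj_maps A K. K - k ` A)"
    by (intro image_eqI[of _ _ "(k'(a := undefined), k' a)"]) simp_all
next
  fix k' assume "k' \<in> (\<lambda>(k, x). k(a := x)) ` (SIGMA k:inj_maps A K. K - k ` A)"
  then obtain k x where k: "k \<in> A \<rightarrow>\<^sub>E K" "inj_on k A" and x: "x \<in> K" "x \<notin> k ` A"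
    and k': "k' = k(a := x)"
    by (auto simp: inj_maps_def)
  have "inj_on (k(a := x)) A = inj_on k A" "k(a := x) ` A = k ` A"
    using assms by (auto intro!: inj_on_cong)
  then show "k' \<in> inj_maps (insert a A) K"
    using PiE_fun_upd[OF x(1) k(1)] k(2) x(2) assms by (simp add: inj_maps_def k')
qed

lemma inj_on_inj_maps_insert:
  assumes "a \<notin> A"
  shows "inj_on (\<lambda>(k, x). k(a := x)) (SIGMA k:inj_maps A K. K - k ` A)"
  by (rule inj_on_subset[OF inj_combinator'[OF assms, of "\<lambda>_. K"]]) (auto simp: inj_maps_def)

definition absorb :: "'a \<Rightarrow> 'a \<Rightarrow> ('a \<Rightarrow> 'b \<Rightarrow> 'c::times) \<Rightarrow> 'a \<Rightarrow> 'b \<Rightarrow> 'c" where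
  "absorb a b w = w(b := (\<lambda>x. w b x * w a x))"

lemma prod_absorb:
  fixes w :: "'a \<Rightarrow> 'b \<Rightarrow> 'c::comm_monoid_mult"
  assumes "finite A" "b \<in> A"
  shows "(\<Prod>j\<in>A. absorb a b w j (f j)) = w a (f b) * (\<Prod>j\<in>A. w j (f j))"
proof -
  have "(\<Prod>j\<in>A - {b}. absorb a b w j (f j)) = (\<Prod>j\<in>A - {b}. w j (f j))"
    by (intro prod.cong) (auto simp: absorb_def)
  then show ?thesis
    using prod.remove[OF assms, of "\<lambda>j. absorb a b w j (f j)"] prod.remove[OF assms, of "\<lambda>j. w j (f j)"]
    by (simp add: absorb_def ac_simps)
qed

lemma prod_absorb_outside:
  "b \<notin> C \<Longrightarrow> (\<Prod>j\<in>C. absorb a b w j (f j)) = (\<Prod>j\<in>C. w j (f j))"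
  by (intro prod.cong) (auto simp: absorb_def)

lemma sum_inj_maps_insert:
  fixes w :: "'a \<Rightarrow> 'b \<Rightarrow> 'c::comm_ring_1"
  assumes "finite A" "finite K" "a \<notin> A"
  shows "(\<Sum>k\<in>inj_maps (insert a A) K. \<Prod>j\<in>insert a A. w j (k j)) =
     (\<Sum>x\<in>K. w a x) * (\<Sum>k\<in>inj_maps A K. \<Prod>j\<in>A. w j (k j))
     - (\<Sum>b\<in>A. \<Sum>k\<in>inj_maps A K. \<Prod>j\<in>A. absorb a b w j (k j))"
proof -
  have "(\<Sum>k\<in>inj_maps (insert a A) K. \<Prod>j\<in>insert a A. w j (k j)) =
      (\<Sum>(k, x)\<in>(SIGMA k:inj_maps A K. K - k ` A). \<Prod>j\<in>insert a A. w j ((k(a := x)) j))"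
    unfolding inj_maps_insert[OF assms(3)]
    by (subst sum.reindex[OF inj_on_inj_maps_insert[OF assms(3)]]) (simp add: case_prod_unfold)
  also have "\<dots> = (\<Sum>k\<in>inj_maps A K. \<Sum>x\<in>K - k ` A. w a x * (\<Prod>j\<in>A. w j (k j)))"
  proof -
    have "(\<Prod>j\<in>A. w j ((k(a := x)) j)) = (\<Prod>j\<in>A. w j (k j))" for k x
      using assms(3) by (intro prod.cong) auto
    then show ?thesis
      using finite_inj_maps[OF assms(1,2)] assms by (subst sum.Sigma) auto
  qed
  also have "\<dots> = (\<Sum>k\<in>inj_maps A K. (\<Sum>x\<in>K. w a x) * (\<Prod>j\<in>A. w j (k j))
       - (\<Sum>b\<in>A. \<Prod>j\<in>A. absorb a b w j (k j)))"
  proof (intro sum.cong refl)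
    fix k assume "k \<in> inj_maps A K"
    then have "k ` A \<subseteq> K" "inj_on k A"
      by (auto simp: inj_maps_def)
    then have "(\<Sum>x\<in>K - k ` A. w a x) = (\<Sum>x\<in>K. w a x) - (\<Sum>b\<in>A. w a (k b))"
      using assms(2) by (simp add: sum_diff sum.reindex)
    then have "(\<Sum>x\<in>K - k ` A. w a x * (\<Prod>j\<in>A. w j (k j))) =
        (\<Sum>x\<in>K. w a x) * (\<Prod>j\<in>A. w j (k j)) - (\<Sum>b\<in>A. w a (k b) * (\<Prod>j\<in>A. w j (k j)))"
      by (simp add: sum_distrib_right[symmetric] left_diff_distrib)
    also have "(\<Sum>b\<in>A. w a (k b) * (\<Prod>j\<in>A. w j (k j))) = (\<Sum>b\<in>A. \<Prod>j\<in>A. absorb a b w j (k j))"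
      by (intro sum.cong refl) (simp add: prod_absorb[OF assms(1)])
    finally show "(\<Sum>x\<in>K - k ` A. w a x * (\<Prod>j\<in>A. w j (k j))) =
        (\<Sum>x\<in>K. w a x) * (\<Prod>j\<in>A. w j (k j)) - (\<Sum>b\<in>A. \<Prod>j\<in>A. absorb a b w j (k j))" .
  qed
  also have "\<dots> = (\<Sum>x\<in>K. w a x) * (\<Sum>k\<in>inj_maps A K. \<Prod>j\<in>A. w j (k j))
     - (\<Sum>b\<in>A. \<Sum>k\<in>inj_maps A K. \<Prod>j\<in>A. absorb a b w j (k j))"
    by (simp add: sum_subtractf sum_distrib_left sum.swap[of _ A])
  finally show ?thesis .
qed

section \<open>Inclusion-exclusion over set partitions\<close>

text \<open>The Moebius value \<open>\<mu>(0, 1)\<close> of the lattice of partitions of an \<open>m\<close>-element set.\<close>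

definition moebius_partition :: "nat \<Rightarrow> 'a::comm_ring_1" where
  "moebius_partition m = (-1) ^ (m - 1) * of_nat (fact (m - 1))"

lemma moebius_partition_Suc:
  "m \<ge> 1 \<Longrightarrow> moebius_partition (Suc m) = - of_nat m * moebius_partition m"
  by (cases m) (auto simp: moebius_partition_def algebra_simps)

definition diag_sum :: "'b set \<Rightarrow> ('a \<Rightarrow> 'b \<Rightarrow> 'c::comm_semiring_1) \<Rightarrow> 'a set \<Rightarrow> 'c" where
  "diag_sum K w B = (\<Sum>x\<in>K. \<Prod>j\<in>B. w j x)"

definition partition_weight :: "'b set \<Rightarrow> ('a \<Rightarrow> 'b \<Rightarrow> 'c::comm_ring_1) \<Rightarrow> 'a set set \<Rightarrow> 'c" where
  "partition_weight K w P = (\<Prod>B\<in>P. moebius_partition (card B) * diag_sum K w B)"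

lemma partition_weight_insert_singleton:
  assumes "finite A" "a \<notin> A" "partition_on A P"
  shows "partition_weight K w (insert {a} P) = (\<Sum>x\<in>K. w a x) * partition_weight K w P"
proof -
  have "{a} \<notin> P"
    using assms(2,3) partition_onD1 by blast
  then show ?thesis
    using finite_elements[OF assms(1,3)] by (simp add: partition_weight_def diag_sum_def moebius_partition_def)
qed

lemma partition_weight_absorb:
  fixes w :: "'a \<Rightarrow> 'b \<Rightarrow> 'c::comm_ring_1"
  assumes "finite A" "a \<notin> A" "partition_on A P" "B \<in> P" "b \<in> B"
  shows "partition_weight K (absorb a b w) P =
    moebius_partition (card B) * diag_sum K w (insert a B) * partition_weight K w (P - {B})"
proof -
  have B: "finite B" "a \<notin> B"
    using partition_onD1[OF assms(3)] assms by (auto intro: finite_subset)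
  have "partition_weight K (absorb a b w) P =
      moebius_partition (card B) * diag_sum K (absorb a b w) B * partition_weight K (absorb a b w) (P - {B})"
    unfolding partition_weight_def prod.remove[OF finite_elements[OF assms(1,3)] assms(4)] by (simp add: mult.assoc)
  also have "diag_sum K (absorb a b w) B = diag_sum K w (insert a B)"
    using prod_absorb[OF B(1) assms(5), of a w] B by (simp add: diag_sum_def)
  also have "partition_weight K (absorb a b w) (P - {B}) = partition_weight K w (P - {B})"
    unfolding partition_weight_def
  proof (intro prod.cong refl arg_cong[where f = "\<lambda>x. _ * x"])
    fix C assume "C \<in> P - {B}"
    then have "b \<notin> C"
      using assms(4,5) partition_onD2[OF assms(3)] by (auto simp: disjoint_def)
    then show "diag_sum K (absorb a b w) C = diag_sum K w C"
      by (simp add: diag_sum_def prod_absorb_outside)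
  qed
  finally show ?thesis .
qed

lemma partition_weight_join:
  fixes w :: "'a \<Rightarrow> 'b \<Rightarrow> 'c::comm_ring_1"
  assumes "finite A" "a \<notin> A" "partition_on A P" "B \<in> P"
  shows "partition_weight K w (insert (insert a B) (P - {B})) =
    - of_nat (card B) * (moebius_partition (card B) * diag_sum K w (insert a B) * partition_weight K w (P - {B}))"
proof -
  have B: "finite B" "B \<noteq> {}" "a \<notin> B"
    using partition_onD1[OF assms(3)] partition_onD3[OF assms(3)] assms by (auto intro: finite_subset)
  then have "insert a B \<notin> P - {B}" "card (insert a B) = Suc (card B)" "card B \<ge> 1"
    using partition_onD1[OF assms(3)] assms(2) by (auto simp: Suc_le_eq card_gt_0_iff)
  then show ?thesis
    using finite_elements[OF assms(1,3)] by (simp add: partition_weight_def moebius_partition_Suc)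
qed

lemma sum_partition_weight_join:
  fixes w :: "'a \<Rightarrow> 'b \<Rightarrow> 'c::comm_ring_1"
  assumes "finite A" "a \<notin> A" "partition_on A P"
  shows "(\<Sum>B\<in>P. partition_weight K w (insert (insert a B) (P - {B})))
       = - (\<Sum>b\<in>A. partition_weight K (absorb a b w) P)"
proof -
  have "(\<Sum>b\<in>A. partition_weight K (absorb a b w) P) = (\<Sum>B\<in>P. \<Sum>b\<in>B. partition_weight K (absorb a b w) P)"
    unfolding partition_onD1[OF assms(3)] using partition_onD2[OF assms(3)] assms(1)
    by (subst sum.Union_disjoint) (auto simp: disjoint_def partition_onD1[OF assms(3), symmetric] intro: finite_subset)
  also have "\<dots> = (\<Sum>B\<in>P. of_nat (card B) *
      (moebius_partition (card B) * diag_sum K w (insert a B) * partition_weight K w (P - {B})))"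
    by (intro sum.cong refl) (simp add: partition_weight_absorb[OF assms])
  also have "\<dots> = - (\<Sum>B\<in>P. partition_weight K w (insert (insert a B) (P - {B})))"
    by (simp add: partition_weight_join[OF assms] sum_negf[symmetric])
  finally show ?thesis
    by simp
qed

lemma sum_inj_maps_eq_sum_partition_weight:
  fixes w :: "'a \<Rightarrow> 'b \<Rightarrow> 'c::comm_ring_1"
  assumes "finite A" "finite K"
  shows "(\<Sum>k\<in>inj_maps A K. \<Prod>j\<in>A. w j (k j)) = (\<Sum>P | partition_on A P. partition_weight K w P)"
  using assms(1)
proof (induction A arbitrary: w rule: finite_induct)
  case empty
  have empty_cases: "inj_maps {} K = {\<lambda>_. undefined}" "{P. partition_on {} P} = {{}}"
    by (auto simp: inj_maps_def partition_on_empty)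
  show ?case
    unfolding empty_cases by (simp add: partition_weight_def)
next
  case (insert a A)
  have "(\<Sum>k\<in>inj_maps (insert a A) K. \<Prod>j\<in>insert a A. w j (k j)) =
      (\<Sum>x\<in>K. w a x) * (\<Sum>P | partition_on A P. partition_weight K w P)
      - (\<Sum>b\<in>A. \<Sum>P | partition_on A P. partition_weight K (absorb a b w) P)"
    by (simp only: sum_inj_maps_insert[OF insert(1) assms(2) insert(2)] insert.IH)
  also have "\<dots> = (\<Sum>P | partition_on A P. (\<Sum>x\<in>K. w a x) * partition_weight K w P
      - (\<Sum>b\<in>A. partition_weight K (absorb a b w) P))"
    by (simp add: sum_distrib_left sum_subtractf sum.swap[of _ A])
  also have "\<dots> = (\<Sum>P | partition_on A P. partition_weight K w (insert {a} P)
      + (\<Sum>B\<in>P. partition_weight K w (insert (insert a B) (P - {B}))))"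
    by (intro sum.cong refl)
      (simp add: partition_weight_insert_singleton[OF insert(1,2)] sum_partition_weight_join[OF insert(1,2)])
  also have "\<dots> = (\<Sum>Q | partition_on (insert a A) Q. partition_weight K w Q)"
    by (rule sum_partitions_insert[OF insert(1,2), symmetric])
  finally show ?case .
qed

section \<open>Permutations and decreasing index lists\<close>

definition mzeta_idx_upto :: "nat \<Rightarrow> nat \<Rightarrow> nat list set" where
  "mzeta_idx_upto m N = {ks \<in> mzeta_idx m. \<forall>k\<in>set ks. k \<le> N}"

lemma mem_mzeta_idx_upto:
  "ks \<in> mzeta_idx_upto m N \<longleftrightarrow> length ks = m \<and> sorted_wrt (>) ks \<and> set ks \<subseteq> {1..N}"
  by (auto simp: mzeta_idx_upto_def mzeta_idx_def Suc_le_eq)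

lemma distinct_if_mem_mzeta_idx_upto: "ks \<in> mzeta_idx_upto m N \<Longrightarrow> distinct ks"
  by (simp add: mem_mzeta_idx_upto strict_sorted_iff sorted_wrt_rev[of "(<)", symmetric])

lemma sorted_wrt_greater_eqI:
  fixes xs ys :: "'a::linorder list"
  shows "sorted_wrt (>) xs \<Longrightarrow> sorted_wrt (>) ys \<Longrightarrow> set xs = set ys \<Longrightarrow> xs = ys"
  using strict_sorted_equal[of "rev ys" "rev xs"] by (simp add: sorted_wrt_rev)

definition permuted_index :: "nat \<Rightarrow> (nat \<Rightarrow> nat) \<Rightarrow> nat list \<Rightarrow> nat \<Rightarrow> nat" where
  "permuted_index n \<sigma> ks = (\<lambda>j\<in>{1..n}. ks ! (inv \<sigma> j - 1))"

lemma permuted_index_apply: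
  assumes "\<sigma> permutes {1..n}" "i \<in> {1..n}"
  shows "permuted_index n \<sigma> ks (\<sigma> i) = ks ! (i - 1)"
  using assms permutes_in_image[OF assms(1)] permutes_inverses(2)[OF assms(1)]
  by (simp add: permuted_index_def)

lemma image_nth_pred: "(\<lambda>i. xs ! (i - 1)) ` {1..length xs} = set xs"
proof -
  have "(\<lambda>i. xs ! (i - 1)) ` {1..length xs} = (\<lambda>i. xs ! (i - 1)) ` Suc ` {..<length xs}"
    by (simp only: image_Suc_lessThan)
  also have "\<dots> = set xs"
    by (auto simp: image_image in_set_conv_nth)
  finally show ?thesis .
qed

lemma bij_betw_nth_pred:
  assumes "distinct xs"
  shows "bij_betw (\<lambda>i. xs ! (i - 1)) {1..length xs} (set xs)"
proof -
  have "inj_on (\<lambda>i. xs ! (i - 1)) {1..length xs}"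
  proof (rule inj_onI)
    fix i j assume i: "i \<in> {1..length xs}" and j: "j \<in> {1..length xs}" and "xs ! (i - 1) = xs ! (j - 1)"
    then have "i - 1 = j - 1"
      using nth_eq_iff_index_eq[OF assms, of "i - 1" "j - 1"] by auto
    then show "i = j"
      using i j by auto
  qed
  then show ?thesis
    using image_nth_pred[of xs] by (simp add: bij_betw_def)
qed

lemma permutes_if_bij_betw:
  assumes "bij_betw f S S"
  shows "(\<lambda>i. if i \<in> S then f i else i) permutes S"
proof (rule bij_imp_permutes)
  show "bij_betw (\<lambda>i. if i \<in> S then f i else i) S S"
    by (rule bij_betw_cong[THEN iffD2, OF _ assms]) simp
qed simp

lemma permuted_index_image:
  assumes "\<sigma> permutes {1..n}" "length ks = n"
  shows "permuted_index n \<sigma> ks ` {1..n} = set ks"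
proof -
  have "permuted_index n \<sigma> ks ` {1..n} = permuted_index n \<sigma> ks ` \<sigma> ` {1..n}"
    by (simp only: permutes_image[OF assms(1)])
  also have "\<dots> = (\<lambda>i. ks ! (i - 1)) ` {1..n}"
    unfolding image_image by (intro image_cong refl) (simp add: permuted_index_apply[OF assms(1)])
  finally show ?thesis
    using image_nth_pred[of ks] assms(2) by simp
qed

lemma prod_permuted_index:
  assumes "\<sigma> permutes {1..n}"
  shows "(\<Prod>j\<in>{1..n}. w j (permuted_index n \<sigma> ks j)) = (\<Prod>j<n. w (\<sigma> (Suc j)) (ks ! j))"
proof -
  have "(\<Prod>j\<in>{1..n}. w j (permuted_index n \<sigma> ks j)) = (\<Prod>i\<in>{1..n}. w (\<sigma> i) (ks ! (i - 1)))"
    by (subst prod.permute[OF assms]) (simp add: permuted_index_apply[OF assms])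
  also have "\<dots> = (\<Prod>j<n. w (\<sigma> (Suc j)) (ks ! j))"
    by (subst image_Suc_lessThan[symmetric]) (simp add: prod.reindex)
  finally show ?thesis .
qed

lemma permuted_index_in_inj_maps:
  assumes "\<sigma> permutes {1..n}" "ks \<in> mzeta_idx_upto n N"
  shows "permuted_index n \<sigma> ks \<in> inj_maps {1..n} {1..N}"
proof -
  have ks: "length ks = n" "distinct ks" "set ks \<subseteq> {1..N}"
    using assms(2) distinct_if_mem_mzeta_idx_upto by (auto simp: mem_mzeta_idx_upto)
  have "inj_on (permuted_index n \<sigma> ks) {1..n}"
    using permuted_index_image[OF assms(1) ks(1)] ks by (simp add: inj_on_iff_eq_card distinct_card)
  then show ?thesis
    using permuted_index_image[OF assms(1) ks(1)] ks(3)
    by (auto simp: inj_maps_def permuted_index_def)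
qed

lemma inj_on_permuted_index:
  "inj_on (\<lambda>(\<sigma>, ks). permuted_index n \<sigma> ks) ({\<sigma>. \<sigma> permutes {1..n}} \<times> mzeta_idx_upto n N)"
proof (rule inj_onI, clarify)
  fix \<sigma>1 ks1 \<sigma>2 ks2
  assume \<sigma>1: "\<sigma>1 permutes {1..n}" and ks1: "ks1 \<in> mzeta_idx_upto n N"
    and \<sigma>2: "\<sigma>2 permutes {1..n}" and ks2: "ks2 \<in> mzeta_idx_upto n N"
    and eq: "permuted_index n \<sigma>1 ks1 = permuted_index n \<sigma>2 ks2"
  have len: "length ks1 = n" "length ks2 = n"
    using ks1 ks2 by (simp_all add: mem_mzeta_idx_upto)
  have ks: "ks1 = ks2"
    using permuted_index_image[OF \<sigma>1 len(1)] permuted_index_image[OF \<sigma>2 len(2)] eq ks1 ks2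
    by (intro sorted_wrt_greater_eqI) (simp_all add: mem_mzeta_idx_upto)
  have "distinct ks1"
    using ks1 by (rule distinct_if_mem_mzeta_idx_upto)
  have "\<sigma>1 i = \<sigma>2 i" if i: "i \<in> {1..n}" for i
  proof -
    define j where "j = inv \<sigma>2 (\<sigma>1 i)"
    have j: "j \<in> {1..n}" "\<sigma>2 j = \<sigma>1 i"
      using i permutes_in_image[OF \<sigma>1] permutes_in_image[OF permutes_inv[OF \<sigma>2]]
        permutes_inverses(1)[OF \<sigma>2] by (auto simp: j_def)
    have "ks1 ! (i - 1) = ks1 ! (j - 1)"
      using permuted_index_apply[OF \<sigma>1 i, of ks1] permuted_index_apply[OF \<sigma>2 j(1), of ks2] eq j(2) ks
      by simp
    then have "i = j"
      using nth_eq_iff_index_eq[OF \<open>distinct ks1\<close>] i j(1) len by auto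
    then show ?thesis
      using j(2) by simp
  qed
  moreover have "\<sigma>1 i = \<sigma>2 i" if "i \<notin> {1..n}" for i
    using that permutes_not_in[OF \<sigma>1] permutes_not_in[OF \<sigma>2] by simp
  ultimately have "\<sigma>1 = \<sigma>2"
    by blast
  with ks show "\<sigma>1 = \<sigma>2 \<and> ks1 = ks2"
    by simp
qed

lemma inj_maps_eq_permuted_index:
  assumes "k \<in> inj_maps {1..n} {1..N}"
  obtains \<sigma> ks where "\<sigma> permutes {1..n}" "ks \<in> mzeta_idx_upto n N" "k = permuted_index n \<sigma> ks"
proof -
  have k: "k \<in> {1..n} \<rightarrow>\<^sub>E {1..N}" "inj_on k {1..n}"
    using assms by (simp_all add: inj_maps_def)
  define ks where "ks = rev (sorted_list_of_set (k ` {1..n}))"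
  have set_ks: "set ks = k ` {1..n}" and "distinct ks" and len: "length ks = n"
    and "sorted_wrt (>) ks"
    unfolding ks_def using k(2) by (simp_all add: card_image sorted_wrt_rev)
  moreover have "k ` {1..n} \<subseteq> {1..N}"
    using k(1) by (auto simp: PiE_iff)
  ultimately have ks: "ks \<in> mzeta_idx_upto n N"
    by (simp add: mem_mzeta_idx_upto)
  \<comment> \<open>\<open>\<sigma> i\<close> is the position in \<open>{1..n}\<close> where \<open>k\<close> takes the \<open>i\<close>-th largest value\<close>
  define \<sigma> where "\<sigma> i = (if i \<in> {1..n} then inv_into {1..n} k (ks ! (i - 1)) else i)" for i
  have "bij_betw (\<lambda>i. ks ! (i - 1)) {1..n} (k ` {1..n})"
    using bij_betw_nth_pred[OF \<open>distinct ks\<close>] len set_ks by simp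
  then have "bij_betw (inv_into {1..n} k \<circ> (\<lambda>i. ks ! (i - 1))) {1..n} {1..n}"
    using bij_betw_inv_into[OF inj_on_imp_bij_betw[OF k(2)]] by (rule bij_betw_trans)
  then have "(\<lambda>i. if i \<in> {1..n} then (inv_into {1..n} k \<circ> (\<lambda>i. ks ! (i - 1))) i else i) permutes {1..n}"
    by (rule permutes_if_bij_betw)
  then have \<sigma>_perm: "\<sigma> permutes {1..n}"
    by (simp only: \<sigma>_def[abs_def] comp_def)
  have at_\<sigma>: "permuted_index n \<sigma> ks (\<sigma> i) = k (\<sigma> i)" if i: "i \<in> {1..n}" for i
  proof -
    have "ks ! (i - 1) \<in> k ` {1..n}"
      using i len set_ks[symmetric] by auto
    then show ?thesis
      using permuted_index_apply[OF \<sigma>_perm i] i by (simp add: \<sigma>_def f_inv_into_f)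
  qed
  have "permuted_index n \<sigma> ks j = k j" if "j \<in> {1..n}" for j
  proof -
    have "j \<in> \<sigma> ` {1..n}"
      using that permutes_image[OF \<sigma>_perm] by simp
    then obtain i where "i \<in> {1..n}" "j = \<sigma> i"
      by blast
    then show ?thesis
      using at_\<sigma> by simp
  qed
  moreover have "permuted_index n \<sigma> ks j = k j" if "j \<notin> {1..n}" for j
    using that PiE_arb[OF k(1)] by (auto simp: permuted_index_def)
  ultimately have "k = permuted_index n \<sigma> ks"
    by (intro ext) (metis (full_types))
  with \<sigma>_perm ks show ?thesis
    by (rule that)
qed

lemma bij_betw_permuted_index:
  "bij_betw (\<lambda>(\<sigma>, ks). permuted_index n \<sigma> ks) ({\<sigma>. \<sigma> permutes {1..n}} \<times> mzeta_idx_upto n N)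
     (inj_maps {1..n} {1..N})"
  unfolding bij_betw_def
proof
  show "inj_on (\<lambda>(\<sigma>, ks). permuted_index n \<sigma> ks) ({\<sigma>. \<sigma> permutes {1..n}} \<times> mzeta_idx_upto n N)"
    by (rule inj_on_permuted_index)
  show "(\<lambda>(\<sigma>, ks). permuted_index n \<sigma> ks) ` ({\<sigma>. \<sigma> permutes {1..n}} \<times> mzeta_idx_upto n N) =
      inj_maps {1..n} {1..N}"
  proof (intro equalityI subsetI)
    fix k assume "k \<in> (\<lambda>(\<sigma>, ks). permuted_index n \<sigma> ks) ` ({\<sigma>. \<sigma> permutes {1..n}} \<times> mzeta_idx_upto n N)"
    then show "k \<in> inj_maps {1..n} {1..N}"
      using permuted_index_in_inj_maps by auto
  next
    fix k assume "k \<in> inj_maps {1..n} {1..N}"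
    then obtain \<sigma> ks where "\<sigma> permutes {1..n}" "ks \<in> mzeta_idx_upto n N" "k = permuted_index n \<sigma> ks"
      by (rule inj_maps_eq_permuted_index)
    then show "k \<in> (\<lambda>(\<sigma>, ks). permuted_index n \<sigma> ks) ` ({\<sigma>. \<sigma> permutes {1..n}} \<times> mzeta_idx_upto n N)"
      by auto
  qed
qed

lemma sum_permutes_mzeta_idx_upto:
  "(\<Sum>\<sigma> | \<sigma> permutes {1..n}. \<Sum>ks\<in>mzeta_idx_upto n N. \<Prod>j<n. w (\<sigma> (Suc j)) (ks ! j)) =
   (\<Sum>k\<in>inj_maps {1..n} {1..N}. \<Prod>j\<in>{1..n}. w j (k j))"
proof -
  have "(\<Sum>\<sigma> | \<sigma> permutes {1..n}. \<Sum>ks\<in>mzeta_idx_upto n N. \<Prod>j<n. w (\<sigma> (Suc j)) (ks ! j)) =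
      (\<Sum>(\<sigma>, ks)\<in>{\<sigma>. \<sigma> permutes {1..n}} \<times> mzeta_idx_upto n N. \<Prod>j\<in>{1..n}. w j (permuted_index n \<sigma> ks j))"
    unfolding sum.cartesian_product[symmetric] by (intro sum.cong refl prod_permuted_index[symmetric]) simp
  also have "\<dots> = (\<Sum>k\<in>inj_maps {1..n} {1..N}. \<Prod>j\<in>{1..n}. w j (k j))"
    using sum.reindex_bij_betw[OF bij_betw_permuted_index, of "\<lambda>k. \<Prod>j\<in>{1..n}. w j (k j)"]
    by (simp add: case_prod_unfold)
  finally show ?thesis .
qed

section \<open>Truncated multiple q-zeta sums\<close>

definition qzeta_term :: "real \<Rightarrow> real \<Rightarrow> nat \<Rightarrow> real" where
  "qzeta_term q t k = q powr ((t - 1) * real k) / qint q (real k) powr t"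

lemma mqzeta_eq_infsum_qzeta_term:
  "mqzeta q ts = (\<Sum>\<^sub>\<infinity>ks\<in>mzeta_idx (length ts). \<Prod>j<length ts. qzeta_term q (ts ! j) (ks ! j))"
  by (simp add: mqzeta_def qzeta_term_def)

lemma qzeta_term_nonneg: "0 \<le> qzeta_term q t k"
  by (simp add: qzeta_term_def)

lemma qint_ge_one:
  assumes "0 < q" "q < 1" "1 \<le> k"
  shows "1 \<le> qint q (real k)"
proof -
  have "q ^ k \<le> q ^ 1"
    using assms by (intro power_decreasing) auto
  then have "q powr real k \<le> q"
    using assms by (simp add: powr_realpow)
  then show ?thesis
    using assms by (simp add: qint_def field_simps)
qed

lemma qzeta_term_le_geometric:
  assumes "0 < q" "q < 1" "1 < t"
  shows "qzeta_term q t k \<le> (q powr (t - 1)) ^ k"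
proof (cases "k = 0")
  case True
  then show ?thesis
    by (simp add: qzeta_term_def qint_def)
next
  case False
  then have "1 \<le> qint q (real k) powr t"
    using qint_ge_one[OF assms(1,2)] assms(3) by (simp add: ge_one_powr_ge_zero)
  then have "qzeta_term q t k \<le> q powr ((t - 1) * real k)"
    unfolding qzeta_term_def using assms(1) by (simp add: divide_le_eq)
  also have "\<dots> = (q powr (t - 1)) ^ k"
    using assms(1) by (simp add: powr_powr[symmetric] powr_realpow)
  finally show ?thesis .
qed

lemma summable_qzeta_term:
  assumes "0 < q" "q < 1" "1 < t"
  shows "summable (qzeta_term q t)"
proof (rule summable_comparison_test)
  show "\<exists>N. \<forall>k\<ge>N. norm (qzeta_term q t k) \<le> (q powr (t - 1)) ^ k"
    using qzeta_term_le_geometric[OF assms] qzeta_term_nonneg by auto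
  have "q powr (t - 1) < 1"
    using assms powr_less_mono2[of "t - 1" q 1] by simp
  then show "summable (\<lambda>k. (q powr (t - 1)) ^ k)"
    using assms by (intro summable_geometric) simp
qed

lemma finite_mzeta_idx_upto: "finite (mzeta_idx_upto m N)"
proof (rule finite_subset)
  show "mzeta_idx_upto m N \<subseteq> {ks. set ks \<subseteq> {..N} \<and> length ks = m}"
    by (auto simp: mem_mzeta_idx_upto subset_iff)
  show "finite {ks. set ks \<subseteq> {..N} \<and> length ks = m}"
    by (rule finite_lists_length_eq) simp
qed

lemma mzeta_idx_upto_subset: "mzeta_idx_upto m N \<subseteq> mzeta_idx m"
  by (auto simp: mzeta_idx_upto_def)

lemma eventually_subset_mzeta_idx_upto:
  assumes "finite F" "F \<subseteq> mzeta_idx m"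
  shows "eventually (\<lambda>N. F \<subseteq> mzeta_idx_upto m N) sequentially"
proof (rule eventually_sequentiallyI)
  fix N assume N: "Max (insert 0 (\<Union>(set ` F))) \<le> N"
  have "k \<le> N" if "ks \<in> F" "k \<in> set ks" for ks k
    using that assms(1) le_trans[OF Max_ge N] by auto
  then show "F \<subseteq> mzeta_idx_upto m N"
    using assms(2) by (auto simp: mzeta_idx_upto_def)
qed

lemma sum_mzeta_idx_upto_le:
  fixes f :: "nat \<Rightarrow> nat \<Rightarrow> real"
  assumes "\<And>j k. 0 \<le> f j k"
  shows "(\<Sum>ks\<in>mzeta_idx_upto m N. \<Prod>j<m. f j (ks ! j)) \<le> (\<Prod>j<m. \<Sum>k\<in>{1..N}. f j k)"
proof -
  define r where "r ks = (\<lambda>j\<in>{..<m}. ks ! j)" for ks :: "nat list"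
  have "inj_on r (mzeta_idx_upto m N)"
  proof (rule inj_onI)
    fix xs ys assume "xs \<in> mzeta_idx_upto m N" "ys \<in> mzeta_idx_upto m N" and eq: "r xs = r ys"
    then have "length xs = m" "length ys = m"
      by (simp_all add: mem_mzeta_idx_upto)
    moreover have "xs ! i = ys ! i" if "i < m" for i
      using fun_cong[OF eq, of i] that by (simp add: r_def)
    ultimately show "xs = ys"
      by (intro nth_equalityI) auto
  qed
  have image: "r ` mzeta_idx_upto m N \<subseteq> {..<m} \<rightarrow>\<^sub>E {1..N}"
  proof
    fix g assume "g \<in> r ` mzeta_idx_upto m N"
    then obtain ks where ks: "length ks = m" "set ks \<subseteq> {1..N}" and g: "g = r ks"
      by (auto simp: mem_mzeta_idx_upto)
    have "ks ! i \<in> {1..N}" if "i < m" for i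
      using that ks nth_mem by blast
    then show "g \<in> {..<m} \<rightarrow>\<^sub>E {1..N}"
      by (simp add: g r_def restrict_PiE_iff)
  qed
  have "(\<Sum>ks\<in>mzeta_idx_upto m N. \<Prod>j<m. f j (ks ! j)) = (\<Sum>ks\<in>mzeta_idx_upto m N. \<Prod>j<m. f j (r ks j))"
    by (intro sum.cong prod.cong) (simp_all add: r_def)
  also have "\<dots> = (\<Sum>g\<in>r ` mzeta_idx_upto m N. \<Prod>j<m. f j (g j))"
    using sum.reindex[OF \<open>inj_on r (mzeta_idx_upto m N)\<close>, of "\<lambda>g. \<Prod>j<m. f j (g j)"] by simp
  also have "\<dots> \<le> (\<Sum>g\<in>{..<m} \<rightarrow>\<^sub>E {1..N}. \<Prod>j<m. f j (g j))"
    by (rule sum_mono2[OF _ image]) (simp_all add: finite_PiE prod_nonneg assms)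
  also have "\<dots> = (\<Prod>j<m. \<Sum>k\<in>{1..N}. f j k)"
    by (rule prod_sum_PiE[symmetric]) auto
  finally show ?thesis .
qed

lemma tendsto_sum_mzeta_idx_upto_infsum:
  fixes f :: "nat list \<Rightarrow> 'a::{comm_monoid_add, t2_space}"
  assumes "f summable_on mzeta_idx m"
  shows "(\<lambda>N. sum f (mzeta_idx_upto m N)) \<longlonglongrightarrow> infsum f (mzeta_idx m)"
proof -
  have "(sum f \<longlongrightarrow> infsum f (mzeta_idx m)) (finite_subsets_at_top (mzeta_idx m))"
    using assms by (simp add: summable_iff_has_sum_infsum has_sum_def)
  moreover have "filterlim (mzeta_idx_upto m) (finite_subsets_at_top (mzeta_idx m)) sequentially"
    unfolding filterlim_finite_subsets_at_top
    using eventually_subset_mzeta_idx_upto finite_mzeta_idx_upto mzeta_idx_upto_subset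
    by (auto elim: eventually_mono)
  ultimately show ?thesis
    by (rule filterlim_compose)
qed

lemma summable_on_prod_qzeta_term:
  assumes q: "0 < q" "q < 1" and ts: "\<And>j. j < length ts \<Longrightarrow> 1 < ts ! j"
  shows "(\<lambda>ks. \<Prod>j<length ts. qzeta_term q (ts ! j) (ks ! j)) summable_on mzeta_idx (length ts)"
proof -
  define m where "m = length ts"
  define h where "h ks = (\<Prod>j<m. qzeta_term q (ts ! j) (ks ! j))" for ks
  have h_nonneg: "0 \<le> h ks" for ks
    unfolding h_def by (simp add: prod_nonneg qzeta_term_nonneg)
  have bounded: "sum h (mzeta_idx_upto m N) \<le> (\<Prod>j<m. suminf (qzeta_term q (ts ! j)))" for N
  proof -
    have "sum h (mzeta_idx_upto m N) \<le> (\<Prod>j<m. \<Sum>k\<in>{1..N}. qzeta_term q (ts ! j) k)"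
      unfolding h_def by (rule sum_mzeta_idx_upto_le) (rule qzeta_term_nonneg)
    also have "\<dots> \<le> (\<Prod>j<m. suminf (qzeta_term q (ts ! j)))"
      using ts summable_qzeta_term[OF q]
      by (intro prod_mono conjI sum_nonneg sum_le_suminf) (auto simp: m_def qzeta_term_nonneg)
    finally show ?thesis .
  qed
  have "h summable_on mzeta_idx m"
  proof (rule nonneg_bdd_above_summable_on)
    show "bdd_above (sum h ` {F. F \<subseteq> mzeta_idx m \<and> finite F})"
    proof (rule bdd_aboveI, clarify)
      fix F assume F: "F \<subseteq> mzeta_idx m" "finite F"
      then obtain N where "F \<subseteq> mzeta_idx_upto m N"
        using eventually_subset_mzeta_idx_upto[OF F(2,1)] eventually_sequentially by auto
      then have "sum h F \<le> sum h (mzeta_idx_upto m N)"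
        by (intro sum_mono2 finite_mzeta_idx_upto h_nonneg)
      then show "sum h F \<le> (\<Prod>j<m. suminf (qzeta_term q (ts ! j)))"
        using bounded by (rule order_trans)
    qed
  qed (rule h_nonneg)
  then show ?thesis
    by (simp add: h_def[abs_def] m_def)
qed

lemma tendsto_sum_mzeta_idx_upto_mqzeta:
  assumes "0 < q" "q < 1" "\<And>j. j < length ts \<Longrightarrow> 1 < ts ! j"
  shows "(\<lambda>N. \<Sum>ks\<in>mzeta_idx_upto (length ts) N. \<Prod>j<length ts. qzeta_term q (ts ! j) (ks ! j))
    \<longlonglongrightarrow> mqzeta q ts"
  unfolding mqzeta_eq_infsum_qzeta_term
  by (rule tendsto_sum_mzeta_idx_upto_infsum[OF summable_on_prod_qzeta_term[OF assms]])

lemma tendsto_sum_qzeta_term_mqzeta_single: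
  assumes "0 < q" "q < 1" "1 < t"
  shows "(\<lambda>N. \<Sum>k\<in>{1..N}. qzeta_term q t k) \<longlonglongrightarrow> mqzeta q [t]"
proof -
  have "mzeta_idx_upto 1 N = (\<lambda>k. [k]) ` {1..N}" for N
    by (auto simp: mem_mzeta_idx_upto length_Suc_conv image_iff)
  then have "(\<Sum>ks\<in>mzeta_idx_upto (length [t]) N. \<Prod>j<length [t]. qzeta_term q ([t] ! j) (ks ! j)) =
      (\<Sum>k\<in>{1..N}. qzeta_term q t k)" for N
    by (simp add: sum.reindex inj_on_def)
  then show ?thesis
    using tendsto_sum_mzeta_idx_upto_mqzeta[of q "[t]"] assms by simp
qed

lemma prod_qzeta_term:
  assumes "0 < q" "q < 1" "1 \<le> k"
  shows "(\<Prod>j\<in>B. qzeta_term q (s j) k) =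
    q powr ((sum s B - real (card B)) * real k) / qint q (real k) powr sum s B"
proof -
  have "(\<Sum>j\<in>B. (s j - 1) * real k) = (sum s B - real (card B)) * real k"
    by (simp add: sum_distrib_right[symmetric] sum_subtractf)
  then have "(\<Prod>j\<in>B. q powr ((s j - 1) * real k)) = q powr ((sum s B - real (card B)) * real k)"
    using assms(1) by (simp add: powr_sum[symmetric])
  moreover have "(\<Prod>j\<in>B. qint q (real k) powr s j) = qint q (real k) powr sum s B"
    using qint_ge_one[OF assms] by (simp add: powr_sum[symmetric])
  ultimately show ?thesis
    by (simp add: qzeta_term_def prod_dividef)
qed

lemma qzeta_term_diff:
  assumes "0 < q" "q < 1" "1 \<le> k" "1 \<le> m" "\<nu> \<le> m - 1"
  shows "qzeta_term q (S - real \<nu>) k = q powr ((S - real m) * real k) / qint q (real k) powr S *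
    ((q powr real k) ^ (m - 1 - \<nu>) * qint q (real k) ^ \<nu>)"
proof -
  define Q where "Q = qint q (real k)"
  have Q: "0 < Q"
    using qint_ge_one[OF assms(1-3)] by (simp add: Q_def)
  have exponent: "(S - real \<nu> - 1) * real k = (S - real m) * real k + real k * real (m - 1 - \<nu>)"
    using assms(4,5) by (simp add: of_nat_diff algebra_simps)
  have "qzeta_term q (S - real \<nu>) k = q powr ((S - real \<nu> - 1) * real k) / Q powr (S - real \<nu>)"
    by (simp add: qzeta_term_def Q_def)
  also have "\<dots> = q powr ((S - real m) * real k) * q powr (real k * real (m - 1 - \<nu>)) / (Q powr S / Q ^ \<nu>)"
    using Q by (simp add: exponent powr_add powr_diff powr_realpow)
  also have "q powr (real k * real (m - 1 - \<nu>)) = (q powr real k) ^ (m - 1 - \<nu>)"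
    using assms(1) by (simp add: powr_powr[symmetric] powr_realpow)
  finally show ?thesis
    using Q by (simp add: Q_def[symmetric] field_simps)
qed

lemma prod_qzeta_term_eq_binomial_sum:
  assumes q: "0 < q" "q < 1" and B: "finite B" "B \<noteq> {}" and k: "1 \<le> k"
  shows "(\<Prod>j\<in>B. qzeta_term q (s j) k) =
    (\<Sum>\<nu> = 0..card B - 1. real ((card B - 1) choose \<nu>) * (1 - q) ^ \<nu> *
       qzeta_term q ((\<Sum>j\<in>B. s j) - real \<nu>) k)"
proof -
  define m where "m = card B"
  define E where "E = q powr ((sum s B - real m) * real k) / qint q (real k) powr sum s B"
  have m: "1 \<le> m"
    using B by (simp add: m_def Suc_le_eq card_gt_0_iff)
  have "(\<Sum>\<nu> = 0..m - 1. real ((m - 1) choose \<nu>) * (1 - q) ^ \<nu> * qzeta_term q (sum s B - real \<nu>) k)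
      = E * (\<Sum>\<nu>\<le>m - 1. real ((m - 1) choose \<nu>) * ((1 - q) * qint q (real k)) ^ \<nu> *
          (q powr real k) ^ (m - 1 - \<nu>))"
    unfolding atLeast0AtMost sum_distrib_left using m
    by (intro sum.cong refl) (simp add: qzeta_term_diff[OF q k] E_def power_mult_distrib ac_simps)
  also have "\<dots> = E * ((1 - q) * qint q (real k) + q powr real k) ^ (m - 1)"
    by (simp add: binomial_ring)
  also have "(1 - q) * qint q (real k) + q powr real k = 1"
    using q by (simp add: qint_def)
  finally show ?thesis
    using prod_qzeta_term[OF q k] by (simp add: m_def E_def)
qed

definition qzeta_block :: "real \<Rightarrow> ('a \<Rightarrow> real) \<Rightarrow> 'a set \<Rightarrow> real" where
  "qzeta_block q s B = (\<Sum>\<nu> = 0..card B - 1. real ((card B - 1) choose \<nu>) * (1 - q) ^ \<nu> *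
     mqzeta q [(\<Sum>j\<in>B. s j) - real \<nu>])"

lemma tendsto_diag_sum_qzeta_block:
  fixes s :: "'a \<Rightarrow> real"
  assumes q: "0 < q" "q < 1" and B: "finite B" "B \<noteq> {}" and s: "\<And>j. j \<in> B \<Longrightarrow> 1 < s j"
  shows "(\<lambda>N. diag_sum {1..N} (\<lambda>j. qzeta_term q (s j)) B) \<longlonglongrightarrow> qzeta_block q s B"
proof -
  define S where "S = (\<Sum>j\<in>B. s j)"
  have "real (card B) < S"
    using sum_strict_mono[OF B, of "\<lambda>_. 1" s] s by (simp add: S_def)
  have S: "1 < S - real \<nu>" if "\<nu> \<in> {0..card B - 1}" for \<nu>
  proof -
    have "\<nu> + 1 \<le> card B"
      using that B card_gt_0_iff[of B] by auto
    then have "real \<nu> + 1 \<le> real (card B)"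
      using of_nat_le_iff[of "\<nu> + 1" "card B", where 'a=real] by simp
    then show ?thesis
      using \<open>real (card B) < S\<close> by linarith
  qed
  have "diag_sum {1..N} (\<lambda>j. qzeta_term q (s j)) B =
     (\<Sum>\<nu> = 0..card B - 1. real ((card B - 1) choose \<nu>) * (1 - q) ^ \<nu> * (\<Sum>k\<in>{1..N}. qzeta_term q (S - real \<nu>) k))" for N
    unfolding diag_sum_def S_def
    by (simp add: prod_qzeta_term_eq_binomial_sum[OF q B] sum_distrib_left) (rule sum.swap)
  moreover have "(\<lambda>N. \<Sum>\<nu> = 0..card B - 1. real ((card B - 1) choose \<nu>) * (1 - q) ^ \<nu> *
      (\<Sum>k\<in>{1..N}. qzeta_term q (S - real \<nu>) k)) \<longlonglongrightarrow> qzeta_block q s B"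
    unfolding qzeta_block_def S_def[symmetric]
    by (intro tendsto_sum tendsto_mult_left tendsto_sum_qzeta_term_mqzeta_single q S)
  ultimately show ?thesis
    by simp
qed

section \<open>The symmetrised sum\<close>

lemma prod_moebius_partition_eq_sign:
  fixes V :: "'a set \<Rightarrow> 'c::{comm_ring_1, ring_char_0}"
  assumes "finite A" "partition_on A P"
  shows "(\<Prod>B\<in>P. moebius_partition (card B) * V B) =
    (-1) ^ (card A - card P) * (\<Prod>B\<in>P. fact (card B - 1) * V B)"
proof -
  have blocks: "finite B" "1 \<le> card B" if "B \<in> P" for B
    using that assms partition_onD1[OF assms(2)] partition_onD3[OF assms(2)]
    by (auto simp: Suc_le_eq card_gt_0_iff intro: finite_subset)
  have "(\<Sum>B\<in>P. card B - 1) + card P = (\<Sum>B\<in>P. card B - 1 + 1)"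
    by (simp only: sum.distrib card_eq_sum)
  also have "\<dots> = (\<Sum>B\<in>P. card B)"
  proof (intro sum.cong refl)
    fix B assume "B \<in> P"
    then show "card B - 1 + 1 = card B"
      using blocks(2)[OF \<open>B \<in> P\<close>] by simp
  qed
  also have "\<dots> = card A"
    using product_partition[OF assms(2) blocks(1)] by simp
  finally have exponents: "(\<Sum>B\<in>P. card B - 1) = card A - card P"
    by linarith
  have "(\<Prod>B\<in>P. moebius_partition (card B) * V B) =
      (\<Prod>B\<in>P. (-1) ^ (card B - 1) * (fact (card B - 1) * V B))"
    by (simp add: moebius_partition_def mult.assoc)
  also have "\<dots> = (\<Prod>B\<in>P. (-1) ^ (card B - 1)) * (\<Prod>B\<in>P. fact (card B - 1) * V B)"
    by (rule prod.distrib)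
  also have "(\<Prod>B\<in>P. (-1::'c) ^ (card B - 1)) = (-1) ^ (card A - card P)"
    by (simp only: power_sum[symmetric] exponents)
  finally show ?thesis .
qed

lemma tendsto_sum_mzeta_idx_upto_permuted:
  assumes q: "0 < q" "q < 1" and \<sigma>: "\<sigma> permutes {1..n}" and s: "\<And>j. j \<in> {1..n} \<Longrightarrow> 1 < s j"
  shows "(\<lambda>N. \<Sum>ks\<in>mzeta_idx_upto n N. \<Prod>j<n. qzeta_term q (s (\<sigma> (Suc j))) (ks ! j))
    \<longlonglongrightarrow> mqzeta q (map (\<lambda>i. s (\<sigma> i)) [1..<n+1])"
proof -
  define ts where "ts = map (\<lambda>i. s (\<sigma> i)) [1..<n+1]"
  have len: "length ts = n"
    by (simp add: ts_def)
  have nth: "ts ! j = s (\<sigma> (Suc j))" if "j < n" for j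
    using that by (simp add: ts_def del: upt_Suc)
  have gt: "1 < ts ! j" if "j < length ts" for j
  proof -
    have "\<sigma> (Suc j) \<in> {1..n}"
      using that len permutes_in_image[OF \<sigma>] by simp
    then show ?thesis
      using s that len nth by simp
  qed
  have "(\<lambda>N. \<Sum>ks\<in>mzeta_idx_upto n N. \<Prod>j<n. qzeta_term q (ts ! j) (ks ! j)) \<longlonglongrightarrow> mqzeta q ts"
    using tendsto_sum_mzeta_idx_upto_mqzeta[OF q gt] by (simp only: len)
  moreover have "(\<lambda>N. \<Sum>ks\<in>mzeta_idx_upto n N. \<Prod>j<n. qzeta_term q (ts ! j) (ks ! j)) =
      (\<lambda>N. \<Sum>ks\<in>mzeta_idx_upto n N. \<Prod>j<n. qzeta_term q (s (\<sigma> (Suc j))) (ks ! j))"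
    by (intro ext sum.cong prod.cong refl) (simp add: nth)
  ultimately show ?thesis
    unfolding ts_def[symmetric] by simp
qed

lemma sum_permutes_mqzeta_eq_sum_partitions:
  assumes q: "0 < q" "q < 1" and s: "\<And>j. j \<in> {1..n} \<Longrightarrow> 1 < s j"
  shows "(\<Sum>\<sigma> | \<sigma> permutes {1..n}. mqzeta q (map (\<lambda>i. s (\<sigma> i)) [1..<n+1])) =
    (\<Sum>P | partition_on {1..n} P. \<Prod>B\<in>P. moebius_partition (card B) * qzeta_block q s B)"
proof -
  define w where "w j = qzeta_term q (s j)" for j
  define L where "L N = (\<Sum>\<sigma> | \<sigma> permutes {1..n}. \<Sum>ks\<in>mzeta_idx_upto n N. \<Prod>j<n. w (\<sigma> (Suc j)) (ks ! j))"
    for N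
  have lim_perm: "L \<longlonglongrightarrow> (\<Sum>\<sigma> | \<sigma> permutes {1..n}. mqzeta q (map (\<lambda>i. s (\<sigma> i)) [1..<n+1]))"
    unfolding L_def w_def by (intro tendsto_sum tendsto_sum_mzeta_idx_upto_permuted q s) auto
  have "L N = (\<Sum>P | partition_on {1..n} P. partition_weight {1..N} w P)" for N
    unfolding L_def sum_permutes_mzeta_idx_upto by (rule sum_inj_maps_eq_sum_partition_weight) auto
  then have L: "L = (\<lambda>N. \<Sum>P | partition_on {1..n} P. partition_weight {1..N} w P)"
    by (rule ext)
  have lim_part: "(\<lambda>N. \<Sum>P | partition_on {1..n} P. partition_weight {1..N} w P)
      \<longlonglongrightarrow> (\<Sum>P | partition_on {1..n} P. \<Prod>B\<in>P. moebius_partition (card B) * qzeta_block q s B)"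
    unfolding partition_weight_def
  proof (intro tendsto_sum tendsto_prod tendsto_mult_left)
    fix P B assume "P \<in> {P. partition_on {1..n} P}" "B \<in> P"
    then have "B \<subseteq> {1..n}" "B \<noteq> {}"
      using partition_onD1[of "{1..n}" P] partition_onD3[of "{1..n}" P] by auto
    then show "(\<lambda>N. diag_sum {1..N} w B) \<longlonglongrightarrow> qzeta_block q s B"
      unfolding w_def using s by (intro tendsto_diag_sum_qzeta_block q) (auto intro: finite_subset)
  qed
  show ?thesis
    using LIMSEQ_unique[OF lim_perm lim_part[folded L]] .
qed

theorem theorem2p3:
  fixes q :: real and n :: nat and s :: "nat \<Rightarrow> real"
  assumes "0 < q" and "q < 1" and "0 < n"
    and "\<And>j. j \<in> {1..n} \<Longrightarrow> s j > 1"
  shows "(\<Sum>\<sigma> \<in> {\<sigma>. \<sigma> permutes {1..n}}. mqzeta q (map (\<lambda>i. s (\<sigma> i)) [1..<n+1]))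
       = (\<Sum>\<P> \<in> {\<P>. partition_on {1..n} \<P>}.
            (-1) ^ (n - card \<P>) *
            (\<Prod>P\<in>\<P>. fact (card P - 1) *
               (\<Sum>\<nu> = 0..card P - 1. real ((card P - 1) choose \<nu>) * (1 - q) ^ \<nu> *
                   mqzeta q [(\<Sum>j\<in>P. s j) - real \<nu>])))"
proof -
  have "(\<Sum>\<sigma> | \<sigma> permutes {1..n}. mqzeta q (map (\<lambda>i. s (\<sigma> i)) [1..<n+1])) =
      (\<Sum>\<P> | partition_on {1..n} \<P>. \<Prod>P\<in>\<P>. moebius_partition (card P) * qzeta_block q s P)"
    using assms(1,2,4) by (rule sum_permutes_mqzeta_eq_sum_partitions)
  also have "\<dots> = (\<Sum>\<P> | partition_on {1..n} \<P>. (-1) ^ (n - card \<P>) * (\<Prod>P\<in>\<P>. fact (card P - 1) * qzeta_block q s P))"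
  proof (intro sum.cong refl)
    fix \<P> assume "\<P> \<in> {\<P>. partition_on {1..n} \<P>}"
    then show "(\<Prod>P\<in>\<P>. moebius_partition (card P) * qzeta_block q s P) =
        (-1) ^ (n - card \<P>) * (\<Prod>P\<in>\<P>. fact (card P - 1) * qzeta_block q s P)"
      using prod_moebius_partition_eq_sign[of "{1..n}" \<P> "qzeta_block q s"] by simp
  qed
  finally show ?thesis
    by (simp add: qzeta_block_def)
qed

end
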